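(* Let $p,q$ be odd primes with $q-p=2$, let $\varepsilon\in\{1,-1\}$, let $D=D_1\cdots D_n$ ($n\ge 0$) be a product of distinct odd primes with $\gcd(pq,D)=1$, and let $E_D/\mathbb{Q}$ be the elliptic curve $y^2=x(x+\varepsilon pD)(x+\varepsilon qD)$. For a prime $l$ let $\widetilde{E}_l$ be the reduction modulo $l$ of this equation and $a_l=l+1-\#\widetilde{E}_l(\mathbb{F}_l)$. Then: (1) if $3\nmid pqD$, then $\#\widetilde{E}_3(\mathbb{F}_3)=4$ and $a_3=0$; (2) if $7\nmid pqD$ and $p\equiv2,3,6\pmod7$, then $\#\widetilde{E}_7(\mathbb{F}_7)=8$ and $a_7=0$; (3) assume $5\nmid pqD$: (3a) if $p\equiv1,2\pmod5$, then $\#\widetilde{E}_5(\mathbb{F}_5)=4$, $a_5=2$ when $D\equiv1,4\pmod5$, and $\#\widetilde{E}_5(\mathbb{F}_5)=8$, $a_5=-2$ when $D\equiv2,3\pmod5$; (3b) if $p\equiv4\pmod5$, then $\#\widetilde{E}_5(\mathbb{F}_5)=8$, $a_5=-2$ when $D\equiv1,4\pmod5$, and $\#\widetilde{E}_5(\mathbb{F}_5)=4$, $a_5=2$ when $D\equiv2,3\pmod5$; (4) assume $7\nmid pqD$: (4a) if ($\varepsilon=1$ and $p\equiv1\pmod7$) or ($\varepsilon=-1$ and $p\equiv4\pmod7$), then $\#\widetilde{E}_7(\mathbb{F}_7)=12$, $a_7=-4$ when $D\equiv1,2,4\pmod7$, and $\#\widetilde{E}_7(\mathbb{F}_7)=4$,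 $a_7=4$ when $D\equiv3,5,6\pmod7$; (4b) if ($\varepsilon=1$ and $p\equiv4\pmod7$) or ($\varepsilon=-1$ and $p\equiv1\pmod7$), then $\#\widetilde{E}_7(\mathbb{F}_7)=4$, $a_7=4$ when $D\equiv1,2,4\pmod7$, and $\#\widetilde{E}_7(\mathbb{F}_7)=12$, $a_7=-4$ when $D\equiv3,5,6\pmod7$; (5) $\#\widetilde{E}_2(\mathbb{F}_2)=3$; $\#\widetilde{E}_{D_i}(\mathbb{F}_{D_i})=D_i+1$ for $i=1,\dots,n$; $\#\widetilde{E}_p(\mathbb{F}_p)=p$ if $(\frac{2\varepsilon D}{p})=1$ and $=p+2$ if $(\frac{2\varepsilon D}{p})=-1$; $\#\widetilde{E}_q(\mathbb{F}_q)=q$ if $(\frac{-2\varepsilon D}{q})=1$ and $=q+2$ if $(\frac{-2\varepsilon D}{q})=-1$.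
   Context: $\widetilde{E}_l$ denotes the projective plane cubic over $\mathbb{F}_l$ obtained by reducing the given Weierstrass equation modulo $l$; $\#\widetilde{E}_l(\mathbb{F}_l)$ counts all of its $\mathbb{F}_l$-points (including the point at infinity and, in the case of bad reduction, the singular point). $(\frac{\cdot}{\cdot})$ is the Legendre symbol. *)

theory Defs
  imports "HOL-Number_Theory.Number_Theory"
begin

text \<open>Number of F_l-points of the projective cubic y^2 z = x (x + a z)(x + b z)
  reduced mod l: affine solutions over {0..l-1}^2 plus the unique point at
  infinity [0:1:0]. Singular points (bad reduction) are included.\<close>
definition npts :: "int \<Rightarrow> int \<Rightarrow> nat \<Rightarrow> nat" where
  "npts a b l = card {(x :: int, y :: int). x \<in> {0..<int l} \<and> y \<in> {0..<int l} \<and>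
       [y^2 = x * (x + a) * (x + b)] (mod int l)} + 1"

definition trace_al :: "int \<Rightarrow> int \<Rightarrow> nat \<Rightarrow> int" where
  "trace_al a b l = int l + 1 - int (npts a b l)"

end

theory Submission
  imports Defs
begin

text \<open>At a prime \<open>l\<close> dividing \<open>pqD\<close> one of \<open>\<epsilon>pD, \<epsilon>qD\<close> vanishes mod \<open>l\<close> and the
  reduction is the singular cubic \<open>y\<^sup>2 = x\<^sup>2(x + c)\<close> with \<open>c = 2\<epsilon>D\<close> (\<open>l = p\<close>),
  \<open>c = -2\<epsilon>D\<close> (\<open>l = q\<close>) or \<open>c = 0\<close> (\<open>l | D\<close>). The lines of slope \<open>t\<close> through the
  singular point \<open>(0, 0)\<close> meet it once more, in \<open>(t\<^sup>2 - c, t(t\<^sup>2 - c))\<close>, which is a new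
  point exactly when \<open>t\<^sup>2 \<noteq> c\<close>; hence the cubic has \<open>l + 1 - (c/l)\<close> points. At
  \<open>l = 2, 3, 5, 7\<close> the count depends only on \<open>\<epsilon>\<close>, \<open>p mod l\<close> and \<open>D mod l\<close>, and the
  finitely many cases are evaluated.\<close>

lemma npts_eq_length_filter:
  "npts a b l = length (filter (\<lambda>(x, y). (y^2 - x * (x + a) * (x + b)) mod int l = 0)
      (List.product [0..int l - 1] [0..int l - 1])) + 1"
proof -
  let ?pts = "filter (\<lambda>(x, y). (y^2 - x * (x + a) * (x + b)) mod int l = 0)
      (List.product [0..int l - 1] [0..int l - 1])"
  have pts: "{(x, y). x \<in> {0..<int l} \<and> y \<in> {0..<int l} \<and> [y^2 = x * (x + a) * (x + b)] (mod int l)}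
      = set ?pts"
    by (auto simp: cong_iff_dvd_diff dvd_eq_mod_eq_0)
  have "card (set ?pts) = length ?pts"
    by (rule distinct_card) (simp add: distinct_product)
  then show ?thesis
    unfolding npts_def pts by simp
qed

lemma npts_cong:
  assumes "[a = a'] (mod int l)" "[b = b'] (mod int l)"
  shows "npts a b l = npts a' b' l"
proof -
  have "[x * (x + a) * (x + b) = x * (x + a') * (x + b')] (mod int l)" for x
    using assms by (intro cong_mult cong_add cong_refl)
  then have "(x * (x + a) * (x + b)) mod int l = (x * (x + a') * (x + b')) mod int l" for x
    by (simp add: cong_def)
  then show ?thesis
    unfolding npts_def cong_def by simp
qed

lemma npts_swap: "npts a b l = npts b a l"
  unfolding npts_def by (simp add: mult.assoc mult.commute mult.left_commute)

lemma square_roots_mod_prime: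
  fixes P s :: int
  assumes "prime P"
  shows "{t \<in> {0..<P}. [t^2 = s^2] (mod P)} = {s mod P, (- s) mod P}"
proof -
  have P: "P > 0"
    using assms prime_gt_0_int by blast
  have "[t^2 = s^2] (mod P) \<longleftrightarrow> [t = s] (mod P) \<or> [t = - s] (mod P)" for t
  proof -
    have "t^2 - s^2 = (t - s) * (t - - s)"
      by (simp add: power2_eq_square algebra_simps)
    then show ?thesis
      using assms by (simp add: cong_iff_dvd_diff prime_dvd_mult_iff)
  qed
  moreover have "t \<in> {0..<P} \<and> [t = u] (mod P) \<longleftrightarrow> t = u mod P" for t u
    using P by (auto simp: cong_def)
  ultimately show ?thesis
    by blast
qed

lemma card_square_roots_mod_prime:
  fixes P c :: int
  assumes prime: "prime P" and odd: "odd P"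
  shows "card {t \<in> {0..<P}. [t^2 = c] (mod P)} = nat (1 + Legendre c P)"
proof -
  have roots: "{t \<in> {0..<P}. [t^2 = c] (mod P)} = {s mod P, (- s) mod P}"
    if "[s^2 = c] (mod P)" for s
  proof -
    have "[t^2 = c] (mod P) \<longleftrightarrow> [t^2 = s^2] (mod P)" for t
      using that by (meson cong_sym cong_trans)
    then show ?thesis
      using square_roots_mod_prime[OF prime, of s] by simp
  qed
  consider "[c = 0] (mod P)" | "\<not> [c = 0] (mod P)" "QuadRes P c"
    | "\<not> [c = 0] (mod P)" "\<not> QuadRes P c"
    by blast
  then show ?thesis
  proof cases
    case 1
    then have "{t \<in> {0..<P}. [t^2 = c] (mod P)} = {0}"
      using roots[of 0] by (simp add: cong_sym)
    with 1 show ?thesis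
      by (simp add: Legendre_def)
  next
    case 2
    then obtain s where s: "[s^2 = c] (mod P)"
      unfolding QuadRes_def by blast
    have "s mod P \<noteq> (- s) mod P"
    proof
      assume "s mod P = (- s) mod P"
      then have "P dvd 2 * s"
        by (simp add: mod_eq_dvd_iff)
      moreover have "\<not> P dvd 2"
        using prime odd primes_dvd_imp_eq two_is_prime by blast
      ultimately have "P dvd s"
        using prime prime_dvd_mult_iff by blast
      then have "[c = 0] (mod P)"
        using s by (metis cong_0_iff cong_dvd_iff cong_pow zero_power2)
      with 2 show False by simp
    qed
    with 2 show ?thesis
      using roots[OF s] by (simp add: Legendre_def)
  next
    case 3
    then have no_roots: "{t \<in> {0..<P}. [t^2 = c] (mod P)} = {}"
      unfolding QuadRes_def by blast
    from 3 show ?thesis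
      unfolding no_roots by (simp add: Legendre_def)
  qed
qed

lemma nodal_cubic_slope:
  fixes P c x y :: int
  assumes prime: "prime P" and x: "\<not> [x = 0] (mod P)"
    and y: "[y^2 = x * x * (x + c)] (mod P)"
  obtains t where "0 \<le> t" "t < P" "[t^2 - c = x] (mod P)" "[t * x = y] (mod P)"
proof -
  have "coprime x P"
    using prime x by (metis cong_0_iff coprime_commute prime_imp_coprime)
  then obtain u where u: "[x * u = 1] (mod P)"
    using cong_solve_coprime_int by blast
  define t where "t = (y * u) mod P"
  have tx: "[t * x = y] (mod P)"
  proof -
    have "[t * x = y * (x * u)] (mod P)"
      unfolding t_def by (metis cong_mod_left cong_refl cong_mult mult.assoc mult.commute)
    also have "[y * (x * u) = y * 1] (mod P)"
      using u by (rule cong_scalar_left)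
    finally show ?thesis by simp
  qed
  have "[(x * x) * t^2 = (x * x) * (x + c)] (mod P)"
  proof -
    have "[(t * x)^2 = y^2] (mod P)"
      using tx by (rule cong_pow)
    then show ?thesis
      using y by (simp add: power2_eq_square algebra_simps cong_trans)
  qed
  moreover have "coprime (x * x) P"
    using \<open>coprime x P\<close> by simp
  ultimately have "[t^2 = x + c] (mod P)"
    using cong_mult_lcancel by blast
  then have "[t^2 - c = x] (mod P)"
    by (metis add_diff_cancel_right' cong_diff cong_refl)
  moreover have "0 \<le> t" "t < P"
    unfolding t_def using prime prime_gt_0_int by auto
  ultimately show thesis
    using that tx by blast
qed

lemma nodal_cubic_points:
  fixes P c :: int
  assumes prime: "prime P"
  shows "{(x, y). x \<in> {0..<P} \<and> y \<in> {0..<P} \<and> [y^2 = x * x * (x + c)] (mod P)}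
       = insert (0, 0) ((\<lambda>t. ((t^2 - c) mod P, t * (t^2 - c) mod P))
                         ` {t \<in> {0..<P}. \<not> [t^2 = c] (mod P)})"
    (is "?S = insert (0, 0) (?f ` ?T)")
proof (intro equalityI subsetI)
  have P: "P > 0"
    using prime prime_gt_0_int by blast
  fix z assume "z \<in> ?S"
  then obtain x y where z: "z = (x, y)" "0 \<le> x" "x < P" "0 \<le> y" "y < P"
    and xy: "[y^2 = x * x * (x + c)] (mod P)"
    by auto
  show "z \<in> insert (0, 0) (?f ` ?T)"
  proof (cases "[x = 0] (mod P)")
    case True
    then have "x = 0"
      using z by (simp add: cong_def)
    then have "P dvd y"
      using xy prime prime_dvd_power by (auto simp: cong_0_iff)
    then have "y = 0"
      using z by (metis dvd_imp_mod_0 mod_pos_pos_trivial)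
    with \<open>x = 0\<close> z show ?thesis by simp
  next
    case False
    then obtain t where t: "0 \<le> t" "t < P" "[t^2 - c = x] (mod P)" "[t * x = y] (mod P)"
      using nodal_cubic_slope prime xy by blast
    have "\<not> [t^2 = c] (mod P)"
      using False t(3) by (metis cong_diff_iff_cong_0 cong_sym cong_trans)
    moreover have "[t * (t^2 - c) = y] (mod P)"
      using t(3,4) by (metis cong_scalar_left cong_trans)
    ultimately show ?thesis
      using t z by (auto simp: cong_def image_iff)
  qed
next
  fix z assume "z \<in> insert (0, 0) (?f ` ?T)"
  moreover have "?f t \<in> ?S" for t
  proof -
    define X where "X = t^2 - c"
    have "[((t * X) mod P)^2 = (t * X)^2] (mod P)"
      by (intro cong_pow) simp
    also have "(t * X)^2 = X * X * (X + c)"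
      unfolding X_def by (simp add: power2_eq_square algebra_simps)
    also have "[X * X * (X + c) = (X mod P) * (X mod P) * (X mod P + c)] (mod P)"
      by (intro cong_mult cong_add) (simp_all add: cong_def)
    finally show ?thesis
      unfolding X_def using prime_gt_0_int[OF prime] by simp
  qed
  ultimately show "z \<in> ?S"
    using prime prime_gt_0_int by auto
qed

lemma card_nodal_cubic_points:
  fixes P c :: int
  assumes prime: "prime P"
  shows "card {(x, y). x \<in> {0..<P} \<and> y \<in> {0..<P} \<and> [y^2 = x * x * (x + c)] (mod P)}
       = card {t \<in> {0..<P}. \<not> [t^2 = c] (mod P)} + 1"
proof -
  let ?f = "\<lambda>t. ((t^2 - c) mod P, t * (t^2 - c) mod P)"
  let ?T = "{t \<in> {0..<P}. \<not> [t^2 = c] (mod P)}"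
  have "inj_on ?f ?T"
  proof
    fix s t assume s: "s \<in> ?T" and t: "t \<in> ?T" and "?f s = ?f t"
    then have "[s^2 - c = t^2 - c] (mod P)" and "[s * (s^2 - c) = t * (t^2 - c)] (mod P)"
      by (simp_all add: cong_def)
    then have "[s * (t^2 - c) = t * (t^2 - c)] (mod P)"
      by (metis cong_scalar_left cong_sym cong_trans)
    moreover have "coprime (t^2 - c) P"
      using t prime by (metis (mono_tags) cong_diff_iff_cong_0 cong_0_iff coprime_commute
          mem_Collect_eq prime_imp_coprime)
    ultimately have "[s = t] (mod P)"
      using cong_mult_rcancel by blast
    with s t show "s = t"
      by (simp add: cong_def)
  qed
  moreover have "(0, 0) \<notin> ?f ` ?T"
    by (auto simp: cong_iff_dvd_diff dvd_eq_mod_eq_0)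
  moreover have "finite ?T"
    by (rule finite_subset[of _ "{0..<P}"]) auto
  ultimately show ?thesis
    unfolding nodal_cubic_points[OF prime] by (simp add: card_image)
qed

lemma npts_singular:
  fixes l :: nat and a b c :: int
  assumes prime: "prime l" and odd: "odd l"
    and a: "[a = 0] (mod int l)" and b: "[b = c] (mod int l)"
  shows "int (npts a b l) = int l + 1 - Legendre c (int l)"
proof -
  let ?roots = "{t \<in> {0..<int l}. [t^2 = c] (mod int l)}"
  let ?nonroots = "{t \<in> {0..<int l}. \<not> [t^2 = c] (mod int l)}"
  have "npts a b l = npts 0 c l"
    using a b by (rule npts_cong)
  also have "\<dots> = card ?nonroots + 2"
    using card_nodal_cubic_points[of "int l" c] prime by (simp add: npts_def)
  finally have npts: "npts a b l = card ?nonroots + 2" .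
  have "card ?nonroots + card ?roots = card (?nonroots \<union> ?roots)"
    by (rule card_Un_disjoint[symmetric]) (auto intro: finite_subset[of _ "{0..<int l}"])
  also have "?nonroots \<union> ?roots = {0..<int l}"
    by auto
  finally have "card ?nonroots + card ?roots = l"
    by simp
  moreover have "card ?roots = nat (1 + Legendre c (int l))"
    using card_square_roots_mod_prime[of "int l" c] prime odd by simp
  moreover have "0 \<le> 1 + Legendre c (int l)"
    by (simp add: Legendre_def)
  ultimately show ?thesis
    unfolding npts by linarith
qed

definition twin_curve_npts :: "int \<Rightarrow> nat \<Rightarrow> nat \<Rightarrow> nat \<Rightarrow> nat" where
  "twin_curve_npts e p D l = npts (e * int p * int D) (e * int (p + 2) * int D) l"

lemma twin_curve_npts_mod: "twin_curve_npts e p D l = twin_curve_npts e (p mod l) (D mod l) l"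
  unfolding twin_curve_npts_def
  by (intro npts_cong cong_mult cong_refl) (simp_all add: cong_def of_nat_mod mod_add_right_eq)

lemma dvd_twin_product_mod:
  fixes l p D :: nat
  shows "l dvd p * (p + 2) * D \<longleftrightarrow> l dvd (p mod l) * (p mod l + 2) * (D mod l)"
proof -
  have "[p * (p + 2) * D = (p mod l) * (p mod l + 2) * (D mod l)] (mod l)"
    by (intro cong_mult cong_add) (simp_all add: cong_def)
  then show ?thesis
    by (rule cong_dvd_iff)
qed

text \<open>The intervals \<open>{..<n}\<close> are enumerated by rewriting beforehand: evaluating them
  inside \<open>code_simp\<close> is extremely slow.\<close>

lemmas twin_curve_npts_eval =
  twin_curve_npts_def npts_eq_length_filter
  lessThan_nat_numeral pred_numeral_simps BitM.simps lessThan_0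

lemma twin_curve_npts_table_2:
  "\<forall>e\<in>{1, -1}. \<forall>i\<in>{..<2}. \<forall>j\<in>{..<2}. \<not> 2 dvd i * (i + 2) * j \<longrightarrow> twin_curve_npts e i j 2 = 3"
  unfolding twin_curve_npts_eval by code_simp

lemma twin_curve_npts_table_3:
  "\<forall>e\<in>{1, -1}. \<forall>i\<in>{..<3}. \<forall>j\<in>{..<3}. \<not> 3 dvd i * (i + 2) * j \<longrightarrow> twin_curve_npts e i j 3 = 4"
  unfolding twin_curve_npts_eval by code_simp

lemma twin_curve_npts_table_5:
  "\<forall>e\<in>{1, -1}. \<forall>i\<in>{..<5}. \<forall>j\<in>{..<5}. \<not> 5 dvd i * (i + 2) * j \<longrightarrow>
     (i \<in> {1, 2} \<longrightarrow> (j \<in> {1, 4} \<longrightarrow> twin_curve_npts e i j 5 = 4)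
                   \<and> (j \<in> {2, 3} \<longrightarrow> twin_curve_npts e i j 5 = 8))
   \<and> (i = 4 \<longrightarrow> (j \<in> {1, 4} \<longrightarrow> twin_curve_npts e i j 5 = 8)
              \<and> (j \<in> {2, 3} \<longrightarrow> twin_curve_npts e i j 5 = 4))"
  unfolding twin_curve_npts_eval by code_simp

lemma twin_curve_npts_table_7:
  "\<forall>e\<in>{1, -1}. \<forall>i\<in>{..<7}. \<forall>j\<in>{..<7}. \<not> 7 dvd i * (i + 2) * j \<longrightarrow>
     (i \<in> {2, 3, 6} \<longrightarrow> twin_curve_npts e i j 7 = 8)
   \<and> ((e = 1 \<and> i = 1) \<or> (e = -1 \<and> i = 4) \<longrightarrow>
        (j \<in> {1, 2, 4} \<longrightarrow> twin_curve_npts e i j 7 = 12)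
      \<and> (j \<in> {3, 5, 6} \<longrightarrow> twin_curve_npts e i j 7 = 4))
   \<and> ((e = 1 \<and> i = 4) \<or> (e = -1 \<and> i = 1) \<longrightarrow>
        (j \<in> {1, 2, 4} \<longrightarrow> twin_curve_npts e i j 7 = 4)
      \<and> (j \<in> {3, 5, 6} \<longrightarrow> twin_curve_npts e i j 7 = 12))"
  unfolding twin_curve_npts_eval by code_simp

lemma twin_curve_npts_at_divisor:
  assumes "prime r" "odd r" "r dvd D"
  shows "twin_curve_npts e p D r = r + 1"
proof -
  have "[e * int p * int D = 0] (mod int r)" "[e * int (p + 2) * int D = 0] (mod int r)"
    using assms(3) by (simp_all add: cong_0_iff)
  then have "int (twin_curve_npts e p D r) = int r + 1 - Legendre 0 (int r)"
    unfolding twin_curve_npts_def using assms(1,2) by (intro npts_singular)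
  then show ?thesis
    by (simp add: Legendre_def)
qed

lemma twin_curve_npts_at_p:
  assumes "prime p" "odd p"
  shows "int (twin_curve_npts e p D p) = int p + 1 - Legendre (2 * e * int D) (int p)"
proof -
  have "e * int (p + 2) * int D - 2 * e * int D = int p * (e * int D)"
    by (simp add: algebra_simps)
  then have "[e * int (p + 2) * int D = 2 * e * int D] (mod int p)"
    by (simp add: cong_iff_dvd_diff)
  moreover have "[e * int p * int D = 0] (mod int p)"
    by (simp add: cong_0_iff)
  ultimately show ?thesis
    unfolding twin_curve_npts_def using assms by (intro npts_singular)
qed

lemma twin_curve_npts_at_p_plus_2:
  assumes "prime (p + 2)" "odd (p + 2)"
  shows "int (twin_curve_npts e p D (p + 2))
       = int (p + 2) + 1 - Legendre (-2 * e * int D) (int (p + 2))"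
proof -
  have "e * int p * int D - (-2 * e * int D) = int (p + 2) * (e * int D)"
    by (simp add: algebra_simps)
  then have "[e * int p * int D = -2 * e * int D] (mod int (p + 2))"
    by (simp add: cong_iff_dvd_diff)
  moreover have "[e * int (p + 2) * int D = 0] (mod int (p + 2))"
    by (simp add: cong_0_iff)
  ultimately show ?thesis
    unfolding twin_curve_npts_def npts_swap[of "e * int p * int D"] using assms
    by (intro npts_singular)
qed

theorem lemma2p3:
  fixes p q :: nat and \<epsilon> :: int and Ds :: "nat list" and D :: nat
  assumes "prime p" "prime q" "odd p" "odd q" "q = p + 2"
    and "\<epsilon> \<in> {1, -1}"
    and "distinct Ds" "\<forall>r\<in>set Ds. prime r \<and> odd r" "D = prod_list Ds"
    and "gcd (p * q) D = 1"
  defines "A \<equiv> \<epsilon> * int p * int D" and "B \<equiv> \<epsilon> * int q * int D"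
  shows
   "(\<not> 3 dvd p * q * D \<longrightarrow> npts A B 3 = 4 \<and> trace_al A B 3 = 0)
  \<and> (\<not> 7 dvd p * q * D \<and> p mod 7 \<in> {2, 3, 6} \<longrightarrow> npts A B 7 = 8 \<and> trace_al A B 7 = 0)
  \<and> (\<not> 5 dvd p * q * D \<longrightarrow>
       (p mod 5 \<in> {1, 2} \<longrightarrow>
          (D mod 5 \<in> {1, 4} \<longrightarrow> npts A B 5 = 4 \<and> trace_al A B 5 = 2)
        \<and> (D mod 5 \<in> {2, 3} \<longrightarrow> npts A B 5 = 8 \<and> trace_al A B 5 = -2))
     \<and> (p mod 5 = 4 \<longrightarrow>
          (D mod 5 \<in> {1, 4} \<longrightarrow> npts A B 5 = 8 \<and> trace_al A B 5 = -2)
        \<and> (D mod 5 \<in> {2, 3} \<longrightarrow> npts A B 5 = 4 \<and> trace_al A B 5 = 2)))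
  \<and> (\<not> 7 dvd p * q * D \<longrightarrow>
       ((\<epsilon> = 1 \<and> p mod 7 = 1) \<or> (\<epsilon> = -1 \<and> p mod 7 = 4) \<longrightarrow>
          (D mod 7 \<in> {1, 2, 4} \<longrightarrow> npts A B 7 = 12 \<and> trace_al A B 7 = -4)
        \<and> (D mod 7 \<in> {3, 5, 6} \<longrightarrow> npts A B 7 = 4 \<and> trace_al A B 7 = 4))
     \<and> ((\<epsilon> = 1 \<and> p mod 7 = 4) \<or> (\<epsilon> = -1 \<and> p mod 7 = 1) \<longrightarrow>
          (D mod 7 \<in> {1, 2, 4} \<longrightarrow> npts A B 7 = 4 \<and> trace_al A B 7 = 4)
        \<and> (D mod 7 \<in> {3, 5, 6} \<longrightarrow> npts A B 7 = 12 \<and> trace_al A B 7 = -4)))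
  \<and> (npts A B 2 = 3
     \<and> (\<forall>r\<in>set Ds. npts A B r = r + 1)
     \<and> (Legendre (2 * \<epsilon> * int D) (int p) = 1 \<longrightarrow> npts A B p = p)
     \<and> (Legendre (2 * \<epsilon> * int D) (int p) = -1 \<longrightarrow> npts A B p = p + 2)
     \<and> (Legendre (-2 * \<epsilon> * int D) (int q) = 1 \<longrightarrow> npts A B q = q)
     \<and> (Legendre (-2 * \<epsilon> * int D) (int q) = -1 \<longrightarrow> npts A B q = q + 2))"
proof -
  have npts_AB: "npts A B l = twin_curve_npts \<epsilon> p D l" for l
    unfolding A_def B_def twin_curve_npts_def assms(5) ..
  have residues: "npts A B l = twin_curve_npts \<epsilon> (p mod l) (D mod l) l" for l
    unfolding npts_AB by (rule twin_curve_npts_mod)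
  have pqD: "l dvd p * q * D \<longleftrightarrow> l dvd (p mod l) * (p mod l + 2) * (D mod l)" for l
    unfolding assms(5) by (rule dvd_twin_product_mod)
  have "odd D"
    using assms(8) unfolding assms(9) by (induction Ds) auto
  then have "\<not> 2 dvd p * q * D"
    using assms(3,4) by simp
  moreover have "\<forall>r\<in>set Ds. npts A B r = r + 1"
  proof
    fix r assume r: "r \<in> set Ds"
    then have "r dvd D"
      unfolding assms(9) by (rule prod_list_dvd)
    with r assms(8) show "npts A B r = r + 1"
      unfolding npts_AB by (intro twin_curve_npts_at_divisor) auto
  qed
  moreover have "int (npts A B p) = int p + 1 - Legendre (2 * \<epsilon> * int D) (int p)"
    unfolding npts_AB using assms(1,3) by (rule twin_curve_npts_at_p)
  moreover have "int (npts A B q) = int q + 1 - Legendre (-2 * \<epsilon> * int D) (int q)"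
    unfolding npts_AB using assms(2,4,5) twin_curve_npts_at_p_plus_2 by simp
  ultimately show ?thesis
    using twin_curve_npts_table_2[rule_format, OF assms(6), of "p mod 2" "D mod 2"]
      twin_curve_npts_table_3[rule_format, OF assms(6), of "p mod 3" "D mod 3"]
      twin_curve_npts_table_5[rule_format, OF assms(6), of "p mod 5" "D mod 5"]
      twin_curve_npts_table_7[rule_format, OF assms(6), of "p mod 7" "D mod 7"]
    unfolding trace_al_def residues[symmetric] pqD[symmetric] by auto
qed

end
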